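(* Let $(p_1,\beta_1),\dots,(p_K,\beta_K)$ be pairwise distinct points with $0<p_k<1$ and $0<\beta_k\le\pi/2$. For each $k$ define $F_k:[0,1]\to[0,\pi/2]$ by $$F_k(A)=\begin{cases}0,& A\le p_k,\\[2pt] \dfrac{\pi}{2}-\arccos\dfrac{\sqrt{A^2-p_k^2}}{\sin\beta_k\sqrt{1-p_k^2}},& p_k<A<\sqrt{\sin^2\beta_k+p_k^2\cos^2\beta_k},\\[6pt] \dfrac{\pi}{2},& A\ge\sqrt{\sin^2\beta_k+p_k^2\cos^2\beta_k}.\end{cases}$$ Then $F_1,\dots,F_K$ are linearly independent functions on $[0,1]$. Consequently, for any function $C$ on $[0,1]$ of the form $C(A)=\sum_{k=1}^K w_kF_k(A)$, the weights $w_1,\dots,w_K$ are uniquely determined by $C$.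
   Context: Bin model: the population is divided into bins, each bin $k$ consisting of biaxial ellipsoids with elongation $p_k$ and spin latitude $\beta_k$ (spin longitudes and viewing longitudes isotropic, viewing directions in the reference plane), with occupation number $w_k$. $F_k$ is the corresponding contribution to the cumulative distribution function $C(A)$ of the inverse amplitude $A$. *)

theory Defs
  imports "HOL-Analysis.Analysis"
begin

text \<open>Contribution F_k of a bin with elongation p and spin latitude beta to the
  cumulative distribution function of the inverse amplitude A.\<close>
definition binF :: "real \<Rightarrow> real \<Rightarrow> real \<Rightarrow> real" where
  "binF p \<beta> A =
     (if A \<le> p then 0
      else if A < sqrt ((sin \<beta>)\<^sup>2 + p\<^sup>2 * (cos \<beta>)\<^sup>2)
      then pi / 2 - arccos (sqrt (A\<^sup>2 - p\<^sup>2) / (sin \<beta> * sqrt (1 - p\<^sup>2)))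
      else pi / 2)"

end

theory Submission
  imports Defs
begin

text \<open>Substitute \<open>u = A\<^sup>2\<close>. Then \<open>F\<^sub>k(\<surd>u)\<close> vanishes for \<open>u \<le> p\<^sub>k\<^sup>2\<close>, and on \<open>(p\<^sub>k\<^sup>2, Q\<^sub>k)\<close>,
  with \<open>Q\<^sub>k = binF_cap p\<^sub>k \<beta>\<^sub>k\<close>, its derivative is
  \<open>(Q\<^sub>k - u)\<^bsup>-1/2\<^esup> / (2 \<surd>(u - p\<^sub>k\<^sup>2))\<close>. Just to the right of the smallest \<open>p\<^sub>0\<^sup>2\<close> only the bins
  with \<open>p\<^sub>k = p\<^sub>0\<close> contribute, so a vanishing combination yields
  \<open>\<Sum> w\<^sub>k (Q\<^sub>k - u)\<^bsup>-1/2\<^esup> = 0\<close> on an interval. Differentiating repeatedly gives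
  \<open>\<Sum> w\<^sub>k (Q\<^sub>k - u)\<^bsup>-1/2-n\<^esup> = 0\<close> for all \<open>n\<close>, a Vandermonde system in the distinct values
  \<open>1 / (Q\<^sub>k - u)\<close>; hence these \<open>w\<^sub>k\<close> vanish, and induction on the number of bins finishes.\<close>

lemma power_sums_eq_0_imp_coeffs_eq_0:
  fixes c b :: "'i \<Rightarrow> 'a::idom"
  assumes "finite S" "inj_on b S" "\<And>n. (\<Sum>k\<in>S. c k * b k ^ n) = 0"
  shows "\<forall>k\<in>S. c k = 0"
  using assms
proof (induction S arbitrary: c rule: finite_induct)
  case empty
  then show ?case by simp
next
  case (insert a S)
  have shifted: "(\<Sum>k\<in>S. (c k * (b k - b a)) * b k ^ n) = 0" for n
  proof -
    have "(\<Sum>k\<in>S. (c k * (b k - b a)) * b k ^ n)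
        = (\<Sum>k\<in>insert a S. c k * b k ^ Suc n) - b a * (\<Sum>k\<in>insert a S. c k * b k ^ n)"
      using insert.hyps by (simp add: sum_subtractf sum_distrib_left algebra_simps)
    then show ?thesis using insert.prems(2)[of n] insert.prems(2)[of "Suc n"] by simp
  qed
  have "b k \<noteq> b a" if "k \<in> S" for k
    using insert.prems(1) insert.hyps(2) that by (auto simp: inj_on_def)
  with insert.IH[OF _ shifted] insert.prems(1) have "\<forall>k\<in>S. c k = 0"
    by (simp add: inj_on_insert)
  moreover have "c a = 0"
    using insert.prems(2)[of 0] insert.hyps calculation by simp
  ultimately show ?case by simp
qed

lemma has_real_derivative_eq_0_if_vanishes:
  assumes "(f has_real_derivative D) (at u)" "open S" "u \<in> S" "\<And>v. v \<in> S \<Longrightarrow> f v = 0"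
  shows "D = 0"
proof -
  have "(f has_real_derivative 0) (at u)"
    using has_field_derivative_transform_within_open[OF DERIV_const[of 0] assms(2,3)] assms(4)
    by metis
  with assms(1) show ?thesis by (rule DERIV_unique)
qed

lemma sum_shifted_powr_eq_0_decr_exponent:
  fixes w c :: "'i \<Rightarrow> real"
  assumes "finite G" "\<And>k. k \<in> G \<Longrightarrow> b \<le> c k" "e \<noteq> 0"
    and "\<And>u. u \<in> {a<..<b} \<Longrightarrow> (\<Sum>k\<in>G. w k * (c k - u) powr e) = 0"
    and u: "u \<in> {a<..<b}"
  shows "(\<Sum>k\<in>G. w k * (c k - u) powr (e - 1)) = 0"
proof -
  have "((\<lambda>u. \<Sum>k\<in>G. w k * (c k - u) powr e) has_real_derivative
      (\<Sum>k\<in>G. w k * (e * (c k - u) powr (e - 1) * -1))) (at u)"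
  proof (intro DERIV_sum DERIV_cmult)
    fix k assume "k \<in> G"
    with assms(2) u have "c k - u > 0" by force
    from DERIV_fun_powr[OF DERIV_diff[OF DERIV_const DERIV_ident] this, of e]
    show "((\<lambda>u. (c k - u) powr e) has_real_derivative e * (c k - u) powr (e - 1) * -1) (at u)"
      by simp
  qed
  from has_real_derivative_eq_0_if_vanishes[OF this _ u] assms(4)
  have "- e * (\<Sum>k\<in>G. w k * (c k - u) powr (e - 1)) = 0"
    by (simp add: sum_distrib_left algebra_simps)
  with \<open>e \<noteq> 0\<close> show ?thesis by simp
qed

lemma sum_shifted_powr_eq_0_imp_coeffs_eq_0:
  fixes w c :: "'i \<Rightarrow> real"
  assumes G: "finite G" "inj_on c G" and ab: "a < b" "\<And>k. k \<in> G \<Longrightarrow> b \<le> c k"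
    and e: "e \<notin> \<nat>"
    and vanish: "\<And>u. u \<in> {a<..<b} \<Longrightarrow> (\<Sum>k\<in>G. w k * (c k - u) powr e) = 0"
  shows "\<forall>k\<in>G. w k = 0"
proof -
  have vanish_n: "(\<Sum>k\<in>G. w k * (c k - u) powr (e - real n)) = 0" if "u \<in> {a<..<b}" for n u
    using that
  proof (induction n arbitrary: u)
    case 0
    then show ?case using vanish by simp
  next
    case (Suc n)
    have "e - real n \<noteq> 0" using e by (metis eq_iff_diff_eq_0 of_nat_in_Nats)
    from sum_shifted_powr_eq_0_decr_exponent[OF G(1) ab(2) this Suc.IH Suc.prems]
    show ?case by (simp add: algebra_simps)
  qed
  define u0 where "u0 = (a + b) / 2"
  have u0: "u0 \<in> {a<..<b}" using ab(1) by (simp add: u0_def)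
  have pos: "c k - u0 > 0" if "k \<in> G" for k using ab(2)[OF that] u0 by simp
  have "\<forall>k\<in>G. w k * (c k - u0) powr e = 0"
  proof (rule power_sums_eq_0_imp_coeffs_eq_0[OF G(1), where b = "\<lambda>k. inverse (c k - u0)"])
    show "inj_on (\<lambda>k. inverse (c k - u0)) G"
      using G(2) by (auto simp: inj_on_def)
    fix n
    have "(\<Sum>k\<in>G. w k * (c k - u0) powr e * inverse (c k - u0) ^ n)
        = (\<Sum>k\<in>G. w k * (c k - u0) powr (e - real n))"
      using pos by (intro sum.cong) (simp_all add: powr_diff powr_realpow divide_inverse power_inverse)
    with vanish_n[OF u0, of n]
    show "(\<Sum>k\<in>G. w k * (c k - u0) powr e * inverse (c k - u0) ^ n) = 0" by simp
  qed
  with pos show ?thesis by auto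
qed

definition binF_cap :: "real \<Rightarrow> real \<Rightarrow> real" where
  "binF_cap p \<beta> = (sin \<beta>)\<^sup>2 + p\<^sup>2 * (cos \<beta>)\<^sup>2"

lemma binF_cap_minus_sq: "binF_cap p \<beta> - p\<^sup>2 = (sin \<beta>)\<^sup>2 * (1 - p\<^sup>2)"
  by (simp add: binF_cap_def cos_squared_eq algebra_simps)

lemma binF_cap_bounds:
  assumes "0 < p" "p < 1" "0 < \<beta>" "\<beta> \<le> pi / 2"
  shows "p\<^sup>2 < binF_cap p \<beta>" "binF_cap p \<beta> \<le> 1"
proof -
  have "sin \<beta> > 0" using assms(3,4) by (intro sin_gt_zero) auto
  moreover have "p\<^sup>2 < 1" using assms(1,2) by (simp add: power_less_one_iff)
  ultimately have "(sin \<beta>)\<^sup>2 * (1 - p\<^sup>2) > 0" by simp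
  then show "p\<^sup>2 < binF_cap p \<beta>" using binF_cap_minus_sq[of p \<beta>] by linarith
  have "p\<^sup>2 * (cos \<beta>)\<^sup>2 \<le> (cos \<beta>)\<^sup>2"
    using \<open>p\<^sup>2 < 1\<close> by (simp add: mult_left_le_one_le)
  then show "binF_cap p \<beta> \<le> 1" by (simp add: binF_cap_def sin_squared_eq)
qed

lemma binF_cap_inj:
  assumes "0 < p" "p < 1" "0 < \<beta>" "\<beta> \<le> pi / 2" "0 < \<beta>'" "\<beta>' \<le> pi / 2"
    and "binF_cap p \<beta> = binF_cap p \<beta>'"
  shows "\<beta> = \<beta>'"
proof -
  have "1 - p\<^sup>2 \<noteq> 0" using assms(1,2) by (simp add: power2_eq_1_iff)
  with assms(7) have "(sin \<beta>)\<^sup>2 = (sin \<beta>')\<^sup>2"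
    using binF_cap_minus_sq[of p \<beta>] binF_cap_minus_sq[of p \<beta>'] by simp
  moreover have "sin \<beta> > 0" "sin \<beta>' > 0" using assms(3-6) by (auto intro!: sin_gt_zero)
  ultimately have "sin \<beta> = sin \<beta>'" by (simp add: power2_eq_iff_nonneg)
  moreover have "arcsin (sin \<beta>) = \<beta>" "arcsin (sin \<beta>') = \<beta>'"
    using assms(3-6) by (auto intro!: arcsin_sin)
  ultimately show ?thesis by metis
qed

lemma binF_sqrt_eq_0:
  assumes "0 \<le> p" "u \<le> p\<^sup>2"
  shows "binF p \<beta> (sqrt u) = 0"
proof -
  have "sqrt u \<le> p" using assms real_sqrt_le_mono[OF assms(2)] by simp
  then show ?thesis by (simp add: binF_def)
qed

lemma arccos_sqrt_has_derivative:
  fixes P Q s u :: real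
  assumes s: "0 < s" "s\<^sup>2 = Q - P" and u: "P < u" "u < Q"
  shows "((\<lambda>v. pi / 2 - arccos (sqrt (v - P) / s)) has_real_derivative
           (Q - u) powr (- 1 / 2) / (2 * sqrt (u - P))) (at u)"
proof -
  have "s = sqrt (Q - P)" using s by (simp add: real_sqrt_unique less_imp_le)
  define x where "x = sqrt (u - P) / s"
  have x: "0 < x" "x < 1" using s u by (auto simp: x_def \<open>s = sqrt (Q - P)\<close>)
  have "1 - x\<^sup>2 = (Q - u) / s\<^sup>2"
    using s u by (simp add: x_def power_divide field_simps)
  then have sqrt_1_minus: "sqrt (1 - x\<^sup>2) = sqrt (Q - u) / s"
    using s(1) by (simp add: real_sqrt_divide)
  have "((\<lambda>v. sqrt (v - P) / s) has_real_derivative inverse (sqrt (u - P)) / 2 / s) (at u)"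
    using u s(1) by (auto intro!: derivative_eq_intros)
  then have "((\<lambda>v. arccos (sqrt (v - P) / s)) has_real_derivative
      inverse (- sqrt (1 - x\<^sup>2)) * (inverse (sqrt (u - P)) / 2 / s)) (at u)"
    by (intro DERIV_chain2[where g = "\<lambda>v. sqrt (v - P) / s"])
      (use x DERIV_arccos[of x] in \<open>auto simp: x_def[symmetric]\<close>)
  from DERIV_diff[OF DERIV_const[of "pi / 2"] this]
  have "((\<lambda>v. pi / 2 - arccos (sqrt (v - P) / s)) has_real_derivative
      - (inverse (- sqrt (1 - x\<^sup>2)) * (inverse (sqrt (u - P)) / 2 / s))) (at u)"
    by simp
  moreover have "- (inverse (- sqrt (1 - x\<^sup>2)) * (inverse (sqrt (u - P)) / 2 / s))
      = (Q - u) powr (- 1 / 2) / (2 * sqrt (u - P))"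
  proof -
    have "(Q - u) powr (- 1 / 2) = inverse (sqrt (Q - u))"
      using u by (simp add: powr_minus powr_half_sqrt[symmetric])
    moreover have "sqrt (Q - u) > 0" "sqrt (u - P) > 0" using u by simp_all
    ultimately show ?thesis using s(1) by (simp add: sqrt_1_minus field_simps)
  qed
  ultimately show ?thesis by simp
qed

lemma binF_sqrt_eq_arccos:
  assumes "0 < p" and u: "p\<^sup>2 < u" "u < binF_cap p \<beta>"
  shows "binF p \<beta> (sqrt u) = pi / 2 - arccos (sqrt (u - p\<^sup>2) / (sin \<beta> * sqrt (1 - p\<^sup>2)))"
proof -
  have "p < sqrt u" using u assms(1) real_sqrt_less_mono[of "p\<^sup>2" u] by simp
  moreover have "sqrt u < sqrt (binF_cap p \<beta>)" using u by simp
  moreover have "0 \<le> u" using u(1) zero_le_power2[of p] by linarith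
  ultimately show ?thesis by (simp add: binF_def binF_cap_def)
qed

lemma binF_sqrt_has_derivative:
  assumes "0 < p" "p < 1" "0 < \<beta>" "\<beta> \<le> pi / 2" and u: "p\<^sup>2 < u" "u < binF_cap p \<beta>"
  shows "((\<lambda>u. binF p \<beta> (sqrt u)) has_real_derivative
           (binF_cap p \<beta> - u) powr (- 1 / 2) / (2 * sqrt (u - p\<^sup>2))) (at u)"
proof -
  define s where "s = sin \<beta> * sqrt (1 - p\<^sup>2)"
  have "sin \<beta> > 0" using assms(3,4) by (intro sin_gt_zero) auto
  moreover have "p\<^sup>2 < 1" using assms(1,2) by (simp add: power_less_one_iff)
  ultimately have "s > 0" "s\<^sup>2 = binF_cap p \<beta> - p\<^sup>2"
    by (simp_all add: s_def binF_cap_minus_sq power_mult_distrib)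
  from arccos_sqrt_has_derivative[OF this u]
  show ?thesis
  proof (rule has_field_derivative_transform_within_open[OF _ open_greaterThanLessThan])
    show "u \<in> {p\<^sup>2<..<binF_cap p \<beta>}" using u by simp
  qed (simp add: binF_sqrt_eq_arccos[OF assms(1)] s_def)
qed

lemma binF_gap_above_min_elongation:
  fixes p \<beta> :: "'i \<Rightarrow> real"
  assumes "finite S"
    and p_range: "\<And>k. k \<in> S \<Longrightarrow> 0 < p k \<and> p k < 1"
    and beta_range: "\<And>k. k \<in> S \<Longrightarrow> 0 < \<beta> k \<and> \<beta> k \<le> pi / 2"
    and k0: "k0 \<in> S" "\<And>k. k \<in> S \<Longrightarrow> p k0 \<le> p k"
  obtains b where "(p k0)\<^sup>2 < b" "\<And>k. k \<in> S \<Longrightarrow> b \<le> binF_cap (p k) (\<beta> k)"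
    "\<And>j. j \<in> S \<Longrightarrow> p k0 < p j \<Longrightarrow> b \<le> (p j)\<^sup>2"
proof
  define B where "B = {(p j)\<^sup>2 | j. j \<in> S \<and> p k0 < p j} \<union> (\<lambda>k. binF_cap (p k) (\<beta> k)) ` S"
  have "finite B" using assms(1) by (simp add: B_def)
  then show "Min B \<le> binF_cap (p k) (\<beta> k)" if "k \<in> S" for k
    using that by (simp add: B_def)
  show "Min B \<le> (p j)\<^sup>2" if "j \<in> S" "p k0 < p j" for j
    using \<open>finite B\<close> that by (auto simp: B_def intro!: Min_le)
  have "Min B \<in> B" using \<open>finite B\<close> k0(1) by (intro Min_in) (auto simp: B_def)
  moreover have "(p k0)\<^sup>2 < binF_cap (p k) (\<beta> k)" if "k \<in> S" for k
  proof -
    have "(p k0)\<^sup>2 \<le> (p k)\<^sup>2"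
      using k0(2)[OF that] p_range[OF k0(1)] by (simp add: power_mono)
    moreover have "(p k)\<^sup>2 < binF_cap (p k) (\<beta> k)"
      using binF_cap_bounds(1) p_range[OF that] beta_range[OF that] by simp
    ultimately show ?thesis by linarith
  qed
  moreover have "(p k0)\<^sup>2 < (p j)\<^sup>2" if "p k0 < p j" for j
    using that p_range[OF k0(1)] by (simp add: power_strict_mono)
  ultimately show "(p k0)\<^sup>2 < Min B" by (auto simp: B_def)
qed

text \<open>Differentiating the combination of \<open>F\<^sub>k(\<surd>u)\<close> over bins of equal elongation \<open>p\<^sub>0\<close>
  leaves the common factor \<open>1 / (2 \<surd>(u - p\<^sub>0\<^sup>2))\<close>.\<close>
lemma binF_equal_elongation_sum_eq_0_imp_powr_sum_eq_0:
  fixes p \<beta> w :: "'i \<Rightarrow> real"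
  assumes G: "finite G" "\<And>k. k \<in> G \<Longrightarrow> p k = p0"
    and p0: "0 < p0" "p0 < 1"
    and beta_range: "\<And>k. k \<in> G \<Longrightarrow> 0 < \<beta> k \<and> \<beta> k \<le> pi / 2"
    and b: "\<And>k. k \<in> G \<Longrightarrow> b \<le> binF_cap (p k) (\<beta> k)"
    and vanish: "\<And>u. u \<in> {p0\<^sup>2<..<b} \<Longrightarrow> (\<Sum>k\<in>G. w k * binF (p k) (\<beta> k) (sqrt u)) = 0"
    and u: "u \<in> {p0\<^sup>2<..<b}"
  shows "(\<Sum>k\<in>G. w k * (binF_cap (p k) (\<beta> k) - u) powr (- 1 / 2)) = 0"
proof -
  have "((\<lambda>u. \<Sum>k\<in>G. w k * binF (p k) (\<beta> k) (sqrt u)) has_real_derivative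
      (\<Sum>k\<in>G. w k * ((binF_cap (p k) (\<beta> k) - u) powr (- 1 / 2) / (2 * sqrt (u - p0\<^sup>2))))) (at u)"
  proof (intro DERIV_sum DERIV_cmult)
    fix k assume k: "k \<in> G"
    then have "u < binF_cap p0 (\<beta> k)" using b u G(2) by fastforce
    with k show "((\<lambda>u. binF (p k) (\<beta> k) (sqrt u)) has_real_derivative
        (binF_cap (p k) (\<beta> k) - u) powr (- 1 / 2) / (2 * sqrt (u - p0\<^sup>2))) (at u)"
      using binF_sqrt_has_derivative[of p0 "\<beta> k" u] p0 beta_range[OF k] u G(2)[OF k] by simp
  qed
  from has_real_derivative_eq_0_if_vanishes[OF this _ u] vanish
  have "(\<Sum>k\<in>G. w k * (binF_cap (p k) (\<beta> k) - u) powr (- 1 / 2)) / (2 * sqrt (u - p0\<^sup>2)) = 0"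
    by (simp add: sum_divide_distrib)
  moreover have "sqrt (u - p0\<^sup>2) > 0" using u by simp
  ultimately show ?thesis by simp
qed

lemma binF_weights_vanish_on_min_group:
  fixes p \<beta> w :: "'i \<Rightarrow> real"
  assumes S: "finite S" "inj_on (\<lambda>k. (p k, \<beta> k)) S"
    and p_range: "\<And>k. k \<in> S \<Longrightarrow> 0 < p k \<and> p k < 1"
    and beta_range: "\<And>k. k \<in> S \<Longrightarrow> 0 < \<beta> k \<and> \<beta> k \<le> pi / 2"
    and vanish: "\<And>A. A \<in> {0..1} \<Longrightarrow> (\<Sum>k\<in>S. w k * binF (p k) (\<beta> k) A) = 0"
    and k0: "k0 \<in> S" "\<And>k. k \<in> S \<Longrightarrow> p k0 \<le> p k"
  shows "\<forall>k\<in>{k\<in>S. p k = p k0}. w k = 0"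
proof -
  define G where "G = {k\<in>S. p k = p k0}"
  have G: "finite G" "G \<subseteq> S" "\<And>k. k \<in> G \<Longrightarrow> p k = p k0" using S(1) by (auto simp: G_def)
  obtain b where b: "(p k0)\<^sup>2 < b" "\<And>k. k \<in> S \<Longrightarrow> b \<le> binF_cap (p k) (\<beta> k)"
    and b_le_p: "\<And>j. j \<in> S \<Longrightarrow> p k0 < p j \<Longrightarrow> b \<le> (p j)\<^sup>2"
    using binF_gap_above_min_elongation[of S p \<beta> k0, OF S(1) p_range beta_range k0] by blast
  have vanish_G: "(\<Sum>k\<in>G. w k * binF (p k) (\<beta> k) (sqrt u)) = 0" if u: "u \<in> {(p k0)\<^sup>2<..<b}" for u
  proof -
    have "0 \<le> u" using u zero_le_power2[of "p k0"] by (simp only: greaterThanLessThan_iff) linarith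
    moreover have "u \<le> 1"
      using u b(2)[OF k0(1)] binF_cap_bounds(2)[of "p k0" "\<beta> k0"] p_range[OF k0(1)]
        beta_range[OF k0(1)] by simp
    ultimately have "(\<Sum>k\<in>S. w k * binF (p k) (\<beta> k) (sqrt u)) = 0"
      by (intro vanish) simp
    moreover have "binF (p k) (\<beta> k) (sqrt u) = 0" if "k \<in> S - G" for k
    proof (rule binF_sqrt_eq_0)
      show "0 \<le> p k" using p_range that by force
      have "p k0 < p k" using that k0(2) by (force simp: G_def)
      then show "u \<le> (p k)\<^sup>2" using b_le_p[of k] that u by force
    qed
    ultimately show ?thesis
      using sum.subset_diff[OF G(2) S(1), of "\<lambda>k. w k * binF (p k) (\<beta> k) (sqrt u)"] by simp
  qed
  have vanish_powr: "(\<Sum>k\<in>G. w k * (binF_cap (p k) (\<beta> k) - u) powr (- 1 / 2)) = 0"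
    if "u \<in> {(p k0)\<^sup>2<..<b}" for u
    using binF_equal_elongation_sum_eq_0_imp_powr_sum_eq_0[OF G(1,3) _ _ _ _ vanish_G that]
      p_range[OF k0(1)] beta_range b(2) G(2) by blast
  have "inj_on (\<lambda>k. binF_cap (p k) (\<beta> k)) G"
  proof (rule inj_onI)
    fix k j assume kj: "k \<in> G" "j \<in> G" "binF_cap (p k) (\<beta> k) = binF_cap (p j) (\<beta> j)"
    then have "k \<in> S" "j \<in> S" "p k = p j" using G(2) by (auto simp: G_def)
    moreover have "\<beta> k = \<beta> j"
      using binF_cap_inj[of "p k" "\<beta> k" "\<beta> j"] kj(3) calculation p_range beta_range by simp
    ultimately show "k = j" using inj_onD[OF S(2)] by simp
  qed
  moreover have "- 1 / 2 \<notin> (\<nat> :: real set)" by (auto elim: Nats_cases)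
  ultimately have "\<forall>k\<in>G. w k = 0"
    using sum_shifted_powr_eq_0_imp_coeffs_eq_0[OF G(1) _ b(1) _ _ vanish_powr] b(2) G(2) by blast
  then show ?thesis by (simp add: G_def)
qed

lemma binF_linear_independent:
  fixes p \<beta> w :: "'i \<Rightarrow> real"
  assumes "finite S" "inj_on (\<lambda>k. (p k, \<beta> k)) S"
    and "\<And>k. k \<in> S \<Longrightarrow> 0 < p k \<and> p k < 1"
    and "\<And>k. k \<in> S \<Longrightarrow> 0 < \<beta> k \<and> \<beta> k \<le> pi / 2"
    and "\<And>A. A \<in> {0..1} \<Longrightarrow> (\<Sum>k\<in>S. w k * binF (p k) (\<beta> k) A) = 0"
  shows "\<forall>k\<in>S. w k = 0"
  using assms
proof (induction S rule: finite_psubset_induct)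
  case (psubset S)
  show ?case
  proof (cases "S = {}")
    case False
    have "Min (p ` S) \<in> p ` S" using psubset.hyps False by (intro Min_in) auto
    then obtain k0 where k0: "k0 \<in> S" "p k0 = Min (p ` S)" by auto
    then have k0_min: "p k0 \<le> p k" if "k \<in> S" for k
      using psubset.hyps that by simp
    define G where "G = {k\<in>S. p k = p k0}"
    have wG: "\<forall>k\<in>G. w k = 0"
      unfolding G_def
      using binF_weights_vanish_on_min_group[OF psubset.hyps psubset.prems k0(1) k0_min] .
    have "\<forall>k\<in>S - G. w k = 0"
    proof (rule psubset.IH)
      show "S - G \<subset> S" using k0(1) by (auto simp: G_def)
      fix A :: real assume "A \<in> {0..1}"
      moreover have "(\<Sum>k\<in>S. w k * binF (p k) (\<beta> k) A) = (\<Sum>k\<in>S - G. w k * binF (p k) (\<beta> k) A)"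
        using wG psubset.hyps by (intro sum.mono_neutral_right) (auto simp: G_def)
      ultimately show "(\<Sum>k\<in>S - G. w k * binF (p k) (\<beta> k) A) = 0"
        using psubset.prems(4) by simp
    qed (use psubset.prems in \<open>auto intro: inj_on_subset\<close>)
    with wG show ?thesis by blast
  qed simp
qed

theorem theorem2:
  fixes K :: nat and p \<beta> :: "nat \<Rightarrow> real"
  assumes distinct: "inj_on (\<lambda>k. (p k, \<beta> k)) {..<K}"
    and p_range: "\<And>k. k < K \<Longrightarrow> 0 < p k \<and> p k < 1"
    and beta_range: "\<And>k. k < K \<Longrightarrow> 0 < \<beta> k \<and> \<beta> k \<le> pi / 2"
  shows "(\<forall>w :: nat \<Rightarrow> real.
            (\<forall>A \<in> {0..1}. (\<Sum>k<K. w k * binF (p k) (\<beta> k) A) = 0)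
            \<longrightarrow> (\<forall>k<K. w k = 0))
       \<and> (\<forall>w w' :: nat \<Rightarrow> real.
            (\<forall>A \<in> {0..1}. (\<Sum>k<K. w k * binF (p k) (\<beta> k) A)
                          = (\<Sum>k<K. w' k * binF (p k) (\<beta> k) A))
            \<longrightarrow> (\<forall>k<K. w k = w' k))"
proof -
  have independent: "\<forall>k<K. w k = 0"
    if "\<forall>A \<in> {0..1}. (\<Sum>k<K. w k * binF (p k) (\<beta> k) A) = 0" for w :: "nat \<Rightarrow> real"
    using binF_linear_independent[of "{..<K}" p \<beta> w] distinct p_range beta_range that by simp
  moreover have "\<forall>k<K. w k = w' k"
    if "\<forall>A \<in> {0..1}. (\<Sum>k<K. w k * binF (p k) (\<beta> k) A) = (\<Sum>k<K. w' k * binF (p k) (\<beta> k) A)"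
    for w w' :: "nat \<Rightarrow> real"
    using independent[of "\<lambda>k. w k - w' k"] that by (simp add: left_diff_distrib sum_subtractf)
  ultimately show ?thesis by blast
qed

end
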